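(* Every congestion game structure $\mathcal G=(\mathcal R,c,\mathcal S)$ is equivalent to a common-OD constrained routing game over a (two-terminal) series-parallel network.
   Context: A congestion game structure $\mathcal G=(\mathcal R,c,\mathcal S)$: finite resource set $\mathcal R$ with continuous nondecreasing costs $c_r:\mathbb R_+\to\mathbb R_+$, finite commodity set $\mathcal H$, each $h$ with a nonempty finite family $\mathcal S^h\subseteq 2^{\mathcal R}$ of strategies. For demand $\mu\in\mathbb R_+^{\mathcal H}$, a feasible flow is $f=(f^h_s)$, $f^h_s\ge0$, $\sum_{s\in\mathcal S^h}f^h_s=\mu^h$; loads $x_r=\sum_h\sum_{s\in\mathcal S^h:r\in s}f^h_s$; strategy cost $c_s(f)=\sum_{r\in s}c_r(x_r)$. A constrained routing game $(G,c,\mathcal P)$ consists of a directed multigraph $G=(V,E)$, edge costs $c_e$ (continuous nondecreasing), and for each commodity $h$ of a finite set $\mathcal H$ a nonempty set $\mathcal P^h$ of paths from an origin $O^h$ to a destination $D^h$; it is the congestion game with resources $E$ and strategy sets $\mathcal S^h=\mathcal P^h$ (paths viewed as edge sets). It is common-OD if all commodities share the same origin and destination. A two-terminal series-parallel network is a directed multigraph obtained from single edges by finitely many series compositions (identifying the destination of one with the origin of the other) and parallel compositions (identifying origins and identifying destinations). Two congestion games are equivalent if there are bijections $h\leftrightarrow\tilde h$ between their commodities and $s\leftrightarrow\tilde s$ between their strategies (respecting commodities) such that for every demand $\mu$ and every feasible flow $f$ of the first, the flow $\tilde f$ with $\tilde f_{\tilde s}=f_s$ is feasible for the second and $\tilde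 c_{\tilde s}(\tilde f)=c_s(f)$ for all strategies. *)

theory Defs
  imports "HOL-Analysis.Analysis"
begin

definition admissible_cost :: "(real \<Rightarrow> real) \<Rightarrow> bool" where
  "admissible_cost g \<longleftrightarrow> continuous_on {0..} g \<and> mono_on {0..} g \<and> (\<forall>x\<ge>0. g x \<ge> 0)"

definition congestion_game_structure ::
  "'r set \<Rightarrow> ('r \<Rightarrow> real \<Rightarrow> real) \<Rightarrow> 'h set \<Rightarrow> ('h \<Rightarrow> 'r set set) \<Rightarrow> bool" where
  "congestion_game_structure R c H S \<longleftrightarrow>
     finite R \<and> finite H \<and> (\<forall>r\<in>R. admissible_cost (c r)) \<and>
     (\<forall>h\<in>H. S h \<noteq> {} \<and> finite (S h) \<and> (\<forall>s\<in>S h. s \<subseteq> R))"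

text \<open>Generic congestion games: strategies of type 's, each having a resource set res s
  (res = id for congestion game structures, res = set for paths as edge sets).\<close>
definition feasible_flow :: "'h set \<Rightarrow> ('h \<Rightarrow> 's set) \<Rightarrow> ('h \<Rightarrow> real) \<Rightarrow> ('h \<Rightarrow> 's \<Rightarrow> real) \<Rightarrow> bool" where
  "feasible_flow H S \<mu> f \<longleftrightarrow> (\<forall>h\<in>H. (\<forall>s\<in>S h. f h s \<ge> 0) \<and> sum (f h) (S h) = \<mu> h)"

definition load :: "'h set \<Rightarrow> ('h \<Rightarrow> 's set) \<Rightarrow> ('s \<Rightarrow> 'r set) \<Rightarrow> ('h \<Rightarrow> 's \<Rightarrow> real) \<Rightarrow> 'r \<Rightarrow> real" where
  "load H S res f r = (\<Sum>h\<in>H. \<Sum>s\<in>{s\<in>S h. r \<in> res s}. f h s)"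

definition strategy_cost ::
  "'h set \<Rightarrow> ('h \<Rightarrow> 's set) \<Rightarrow> ('s \<Rightarrow> 'r set) \<Rightarrow> ('r \<Rightarrow> real \<Rightarrow> real) \<Rightarrow> ('h \<Rightarrow> 's \<Rightarrow> real) \<Rightarrow> 's \<Rightarrow> real" where
  "strategy_cost H S res c f s = (\<Sum>r\<in>res s. c r (load H S res f r))"

definition equivalent_games ::
  "'h1 set \<Rightarrow> ('h1 \<Rightarrow> 's1 set) \<Rightarrow> ('s1 \<Rightarrow> 'r1 set) \<Rightarrow> ('r1 \<Rightarrow> real \<Rightarrow> real) \<Rightarrow>
   'h2 set \<Rightarrow> ('h2 \<Rightarrow> 's2 set) \<Rightarrow> ('s2 \<Rightarrow> 'r2 set) \<Rightarrow> ('r2 \<Rightarrow> real \<Rightarrow> real) \<Rightarrow> bool" where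
  "equivalent_games H1 S1 res1 c1 H2 S2 res2 c2 \<longleftrightarrow>
    (\<exists>\<tau> \<sigma>. bij_betw \<tau> H1 H2 \<and> (\<forall>h\<in>H1. bij_betw (\<sigma> h) (S1 h) (S2 (\<tau> h))) \<and>
      (\<forall>\<mu> f g. (\<forall>h\<in>H1. \<mu> h \<ge> 0) \<longrightarrow> feasible_flow H1 S1 \<mu> f \<longrightarrow>
         (\<forall>h\<in>H1. \<forall>s\<in>S1 h. g (\<tau> h) (\<sigma> h s) = f h s) \<longrightarrow>
         feasible_flow H2 S2 (\<lambda>h'. \<mu> (inv_into H1 \<tau> h')) g \<and>
         (\<forall>h\<in>H1. \<forall>s\<in>S1 h. strategy_cost H2 S2 res2 c2 g (\<sigma> h s) = strategy_cost H1 S1 res1 c1 f s)))"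

definition verts :: "'e set \<Rightarrow> ('e \<Rightarrow> 'v) \<Rightarrow> ('e \<Rightarrow> 'v) \<Rightarrow> 'v set" where
  "verts E src tgt = src ` E \<union> tgt ` E"

text \<open>Two-terminal series-parallel networks with origin Or and destination De
  (concrete copies; identification of terminals is expressed through shared vertex labels,
  all other vertices and all edges of the two parts being disjoint).\<close>
inductive series_parallel :: "('e \<Rightarrow> 'v) \<Rightarrow> ('e \<Rightarrow> 'v) \<Rightarrow> 'e set \<Rightarrow> 'v \<Rightarrow> 'v \<Rightarrow> bool"
  for src tgt where
  sp_edge: "src e = Or \<Longrightarrow> tgt e = De \<Longrightarrow> Or \<noteq> De \<Longrightarrow> series_parallel src tgt {e} Or De"
| sp_series: "series_parallel src tgt E1 Or M \<Longrightarrow> series_parallel src tgt E2 M De \<Longrightarrow>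
    E1 \<inter> E2 = {} \<Longrightarrow> verts E1 src tgt \<inter> verts E2 src tgt = {M} \<Longrightarrow>
    series_parallel src tgt (E1 \<union> E2) Or De"
| sp_parallel: "series_parallel src tgt E1 Or De \<Longrightarrow> series_parallel src tgt E2 Or De \<Longrightarrow>
    E1 \<inter> E2 = {} \<Longrightarrow> verts E1 src tgt \<inter> verts E2 src tgt = {Or, De} \<Longrightarrow>
    series_parallel src tgt (E1 \<union> E2) Or De"

definition is_path :: "'e set \<Rightarrow> ('e \<Rightarrow> 'v) \<Rightarrow> ('e \<Rightarrow> 'v) \<Rightarrow> 'v \<Rightarrow> 'v \<Rightarrow> 'e list \<Rightarrow> bool" where
  "is_path E src tgt Or De p \<longleftrightarrow> p \<noteq> [] \<and> set p \<subseteq> E \<and> src (hd p) = Or \<and> tgt (last p) = De \<and>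
     (\<forall>i. Suc i < length p \<longrightarrow> tgt (p ! i) = src (p ! Suc i)) \<and>
     distinct (Or # map tgt p)"

text \<open>Common-OD constrained routing game: all commodities route on paths from Or to De;
  as a congestion game its resources are the edges and a path's resource set is its edge set.\<close>
definition common_OD_routing_game ::
  "'e set \<Rightarrow> ('e \<Rightarrow> 'v) \<Rightarrow> ('e \<Rightarrow> 'v) \<Rightarrow> ('e \<Rightarrow> real \<Rightarrow> real) \<Rightarrow> 'v \<Rightarrow> 'v \<Rightarrow> 'h set \<Rightarrow> ('h \<Rightarrow> 'e list set) \<Rightarrow> bool" where
  "common_OD_routing_game E src tgt c Or De H P \<longleftrightarrow>
     finite E \<and> finite H \<and> (\<forall>e\<in>E. admissible_cost (c e)) \<and>
     (\<forall>h\<in>H. P h \<noteq> {} \<and> (\<forall>p\<in>P h. is_path E src tgt Or De p))"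

end

theory Submission
  imports Defs
begin

text \<open>Enumerate the resources as \<open>r\<^sub>0, \<dots>, r\<^sub>n\<^sub>-\<^sub>1\<close> and build the chain of \<open>n\<close> parallel
  pairs of edges followed by one final edge (so the network is nonempty even when \<open>n = 0\<close>).
  In the \<open>i\<close>-th pair one edge carries the cost of \<open>r\<^sub>i\<close> and the other costs nothing; a strategy
  \<open>s\<close> becomes the path that uses the costly edge exactly at the indices with \<open>r\<^sub>i \<in> s\<close>.
  Distinct strategies give distinct paths, the load on the \<open>i\<close>-th costly edge is the load on
  \<open>r\<^sub>i\<close>, and the zero-cost edges contribute nothing, so strategy costs coincide.\<close>

lemma load_strategy_embedding:
  assumes inj: "\<forall>h\<in>H. inj_on \<sigma> (S h)"
    and P: "\<forall>h\<in>H. P h = \<sigma> ` S h"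
    and mem: "\<forall>h\<in>H. \<forall>s\<in>S h. \<phi> r \<in> res' (\<sigma> s) \<longleftrightarrow> r \<in> res s"
    and flow: "\<forall>h\<in>H. \<forall>s\<in>S h. g h (\<sigma> s) = f h s"
  shows "load H P res' g (\<phi> r) = load H S res f r"
  unfolding load_def
proof (rule sum.cong[OF refl])
  fix h assume h: "h \<in> H"
  have "{p \<in> P h. \<phi> r \<in> res' p} = \<sigma> ` {s \<in> S h. r \<in> res s}"
    using P mem h by auto
  moreover have "inj_on \<sigma> {s \<in> S h. r \<in> res s}"
    using inj h by (auto intro: inj_on_subset)
  ultimately show "(\<Sum>p\<in>{p \<in> P h. \<phi> r \<in> res' p}. g h p) = (\<Sum>s\<in>{s \<in> S h. r \<in> res s}. f h s)"
    using flow h by (simp add: sum.reindex)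
qed

lemma equivalent_games_strategy_embedding:
  assumes inj: "\<forall>h\<in>H. inj_on \<sigma> (S h)"
    and P: "\<forall>h\<in>H. P h = \<sigma> ` S h"
    and inj_\<phi>: "inj_on \<phi> R"
    and strategies: "\<forall>h\<in>H. \<forall>s\<in>S h. res s \<subseteq> R \<and> finite (res' (\<sigma> s))"
    and mem: "\<forall>h\<in>H. \<forall>s\<in>S h. \<forall>r\<in>R. \<phi> r \<in> res' (\<sigma> s) \<longleftrightarrow> r \<in> res s"
    and cost: "\<forall>r\<in>R. c' (\<phi> r) = c r"
    and padding: "\<forall>h\<in>H. \<forall>s\<in>S h. \<forall>e\<in>res' (\<sigma> s) - \<phi> ` R. \<forall>x. c' e x = 0"
  shows "equivalent_games H S res c H P res' c'"
  unfolding equivalent_games_def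
proof (intro exI[of _ id] exI[of _ "\<lambda>_. \<sigma>"] conjI ballI allI impI)
  show "bij_betw id H H" by simp
next
  fix h assume "h \<in> H"
  then show "bij_betw \<sigma> (S h) (P (id h))"
    using inj P by (simp add: bij_betw_def)
next
  fix \<mu> f g
  assume feasible: "feasible_flow H S \<mu> f"
    and "\<forall>h\<in>H. \<forall>s\<in>S h. g (id h) (\<sigma> s) = f h s"
  then have flow: "\<forall>h\<in>H. \<forall>s\<in>S h. g h (\<sigma> s) = f h s" by simp
  show "feasible_flow H P (\<lambda>h'. \<mu> (inv_into H id h')) g"
    unfolding feasible_flow_def
  proof (intro ballI conjI)
    fix h assume h: "h \<in> H"
    show "0 \<le> g h p" if "p \<in> P h" for p
      using that feasible flow P h by (auto simp: feasible_flow_def)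
    have "sum (g h) (P h) = sum (f h) (S h)"
      using inj P flow h by (simp add: sum.reindex)
    then show "sum (g h) (P h) = \<mu> (inv_into H id h)"
      using feasible h by (simp add: feasible_flow_def inv_into_f_f)
  qed
  have load: "load H P res' g (\<phi> r) = load H S res f r" if "r \<in> R" for r
    using mem that by (intro load_strategy_embedding[OF inj P _ flow]) auto
  fix h s assume h: "h \<in> H" and s: "s \<in> S h"
  have s_R: "res s \<subseteq> R" and finite: "finite (res' (\<sigma> s))"
    using strategies h s by auto
  have mem_s: "\<phi> r \<in> res' (\<sigma> s) \<longleftrightarrow> r \<in> res s" if "r \<in> R" for r
    using mem h s that by blast
  have padding_s: "c' e x = 0" if "e \<in> res' (\<sigma> s)" "e \<notin> \<phi> ` res s" for e x
    using padding h s that mem_s by blast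
  have "strategy_cost H P res' c' g (\<sigma> s) = (\<Sum>e\<in>\<phi> ` res s. c' e (load H P res' g e))"
    unfolding strategy_cost_def
    by (rule sum.mono_neutral_right) (use finite s_R mem_s padding_s in auto)
  also have "\<dots> = (\<Sum>r\<in>res s. c' (\<phi> r) (load H P res' g (\<phi> r)))"
    using s_R by (simp add: sum.reindex inj_on_subset[OF inj_\<phi>])
  also have "\<dots> = strategy_cost H S res c f s"
    unfolding strategy_cost_def
    using s_R cost load by (intro sum.cong) auto
  finally show "strategy_cost H P res' c' g (\<sigma> s) = strategy_cost H S res c f s" .
qed

lemma admissible_cost_zero: "admissible_cost (\<lambda>_. 0)"
  by (simp add: admissible_cost_def mono_on_def)

text \<open>Edges \<open>2i\<close> and \<open>2i + 1\<close> both run from vertex \<open>i\<close> to vertex \<open>i + 1\<close>.\<close>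

definition chain_src :: "nat \<Rightarrow> nat" where
  "chain_src e = e div 2"

definition chain_tgt :: "nat \<Rightarrow> nat" where
  "chain_tgt e = Suc (e div 2)"

lemma series_parallel_chain:
  "k \<le> n \<Longrightarrow> series_parallel chain_src chain_tgt {2*k..2*n} k (Suc n)"
proof (induction "n - k" arbitrary: k)
  case 0
  then have "{2*k..2*n} = {2*n}" "k = n" by auto
  moreover have "series_parallel chain_src chain_tgt {2*n} n (Suc n)"
    by (rule series_parallel.sp_edge) (simp_all add: chain_src_def chain_tgt_def)
  ultimately show ?case by simp
next
  case (Suc d)
  then have k: "k < n" by simp
  have pair: "series_parallel chain_src chain_tgt ({2*k} \<union> {2*k+1}) k (Suc k)"
    by (intro series_parallel.sp_parallel series_parallel.sp_edge)
      (auto simp: chain_src_def chain_tgt_def verts_def)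
  have rest: "series_parallel chain_src chain_tgt {2*Suc k..2*n} (Suc k) (Suc n)"
    using Suc.hyps(1)[of "Suc k"] Suc.hyps(2) k by simp
  have "Suc k \<in> chain_src ` {2*Suc k..2*n}"
    using k by (intro image_eqI[of _ _ "2*Suc k"]) (auto simp: chain_src_def)
  then have "verts ({2*k} \<union> {2*k+1}) chain_src chain_tgt \<inter> verts {2*Suc k..2*n} chain_src chain_tgt
      = {Suc k}"
    by (auto simp: verts_def chain_src_def chain_tgt_def)
  then have "series_parallel chain_src chain_tgt (({2*k} \<union> {2*k+1}) \<union> {2*Suc k..2*n}) k (Suc n)"
    by (intro series_parallel.sp_series[OF pair rest]) auto
  moreover have "({2*k} \<union> {2*k+1}) \<union> {2*Suc k..2*n} = {2*k..2*n}"
    using k by auto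
  ultimately show ?case by simp
qed

definition chain_route :: "(nat \<Rightarrow> bool) \<Rightarrow> nat \<Rightarrow> nat list" where
  "chain_route b n = map (\<lambda>i. if b i then 2*i else 2*i+1) [0..<n] @ [2*n]"

lemma length_chain_route [simp]: "length (chain_route b n) = Suc n"
  by (simp add: chain_route_def)

lemma nth_chain_route_div_2: "i \<le> n \<Longrightarrow> chain_route b n ! i div 2 = i"
  by (cases "i < n") (auto simp: chain_route_def nth_append)

lemma set_chain_route:
  "set (chain_route b n) = (\<lambda>i. if b i then 2*i else 2*i+1) ` {0..<n} \<union> {2*n}"
  by (auto simp: chain_route_def)

lemma is_path_chain_route:
  "is_path {0..2*n} chain_src chain_tgt 0 (Suc n) (chain_route b n)"
proof -
  have "map chain_tgt (chain_route b n) = map Suc [0..<Suc n]"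
    by (rule nth_equalityI) (auto simp: chain_tgt_def nth_chain_route_div_2 simp del: upt_Suc)
  moreover have "chain_route b n \<noteq> []" "last (chain_route b n) = 2*n"
    by (simp_all add: chain_route_def)
  ultimately show ?thesis
    unfolding is_path_def
    using nth_chain_route_div_2[of 0 n b]
    by (auto simp: hd_conv_nth chain_src_def chain_tgt_def set_chain_route distinct_map
        nth_chain_route_div_2 simp del: upt_Suc)
qed

lemma even_mem_chain_route: "i < n \<Longrightarrow> 2*i \<in> set (chain_route b n) \<longleftrightarrow> b i"
  by (auto simp: set_chain_route) presburger+

lemma inj_on_chain_route_subsets:
  "inj_on (\<lambda>s. chain_route (\<lambda>i. rr i \<in> s) n) (Pow (rr ` {0..<n}))"
proof (rule inj_onI)
  fix s s' assume s: "s \<in> Pow (rr ` {0..<n})" and s': "s' \<in> Pow (rr ` {0..<n})"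
    and "chain_route (\<lambda>i. rr i \<in> s) n = chain_route (\<lambda>i. rr i \<in> s') n"
  then have "\<forall>i<n. rr i \<in> s \<longleftrightarrow> rr i \<in> s'"
    by (metis even_mem_chain_route)
  with s s' show "s = s'" by auto
qed

definition chain_cost :: "('r \<Rightarrow> real \<Rightarrow> real) \<Rightarrow> (nat \<Rightarrow> 'r) \<Rightarrow> nat \<Rightarrow> nat \<Rightarrow> real \<Rightarrow> real" where
  "chain_cost c rr n e = (if even e \<and> e < 2*n then c (rr (e div 2)) else (\<lambda>_. 0))"

lemma admissible_chain_cost:
  "\<forall>i<n. admissible_cost (c (rr i)) \<Longrightarrow> admissible_cost (chain_cost c rr n e)"
  using admissible_cost_zero by (auto simp: chain_cost_def)

lemma equivalent_games_chain_routing: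
  assumes rr: "bij_betw rr {0..<n} R"
    and strategies: "\<forall>h\<in>H. \<forall>s\<in>S h. s \<subseteq> R"
  shows "equivalent_games H S id c
           H (\<lambda>h. (\<lambda>s. chain_route (\<lambda>i. rr i \<in> s) n) ` S h) set (chain_cost c rr n)"
proof -
  define idx where "idx = inv_into {0..<n} rr"
  have R: "R = rr ` {0..<n}"
    using rr by (simp add: bij_betw_def)
  have rr_idx: "idx r < n \<and> rr (idx r) = r" if "r \<in> R" for r
    using that R bij_betw_inv_into_right[OF rr that] inv_into_into[of r rr "{0..<n}"]
    by (simp add: idx_def)
  have idx_rr: "idx (rr i) = i" if "i < n" for i
    using bij_betw_inv_into_left[OF rr] that by (simp add: idx_def)
  have padding: "chain_cost c rr n e x = 0" if "e \<notin> (\<lambda>r. 2 * idx r) ` R" for e x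
  proof -
    have "\<not> (even e \<and> e < 2*n)"
    proof
      assume "even e \<and> e < 2*n"
      then have "e = 2 * idx (rr (e div 2))" and "rr (e div 2) \<in> R"
        using idx_rr R by auto
      with that show False by blast
    qed
    then show ?thesis by (auto simp: chain_cost_def)
  qed
  show ?thesis
  proof (rule equivalent_games_strategy_embedding[where \<phi> = "\<lambda>r. 2 * idx r" and R = R])
    show "\<forall>h\<in>H. inj_on (\<lambda>s. chain_route (\<lambda>i. rr i \<in> s) n) (S h)"
    proof
      fix h assume "h \<in> H"
      then have "S h \<subseteq> Pow (rr ` {0..<n})"
        using strategies R by auto
      then show "inj_on (\<lambda>s. chain_route (\<lambda>i. rr i \<in> s) n) (S h)"
        by (rule inj_on_subset[OF inj_on_chain_route_subsets])
    qed
    show "inj_on (\<lambda>r. 2 * idx r) R"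
      by (rule inj_onI) (metis rr_idx mult_left_cancel zero_neq_numeral)
    show "\<forall>h\<in>H. \<forall>s\<in>S h. \<forall>r\<in>R. 2 * idx r \<in> set (chain_route (\<lambda>i. rr i \<in> s) n) \<longleftrightarrow> r \<in> id s"
      using rr_idx by (simp add: even_mem_chain_route)
    show "\<forall>r\<in>R. chain_cost c rr n (2 * idx r) = c r"
      using rr_idx by (simp add: chain_cost_def)
    show "\<forall>h\<in>H. \<forall>s\<in>S h. id s \<subseteq> R \<and> finite (set (chain_route (\<lambda>i. rr i \<in> s) n))"
      using strategies by simp
    show "\<forall>h\<in>H. \<forall>s\<in>S h. \<forall>e\<in>set (chain_route (\<lambda>i. rr i \<in> s) n) - (\<lambda>r. 2 * idx r) ` R.
        \<forall>x. chain_cost c rr n e x = 0"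
      using padding by blast
  qed simp
qed

theorem proposition5p1:
  fixes R :: "'r set" and c :: "'r \<Rightarrow> real \<Rightarrow> real" and H :: "'h set" and S :: "'h \<Rightarrow> 'r set set"
  assumes "congestion_game_structure R c H S"
  shows "\<exists>(E :: nat set) (src :: nat \<Rightarrow> nat) (tgt :: nat \<Rightarrow> nat) (Or :: nat) (De :: nat)
            (ce :: nat \<Rightarrow> real \<Rightarrow> real) (H' :: 'h set) (P :: 'h \<Rightarrow> nat list set).
           series_parallel src tgt E Or De \<and>
           common_OD_routing_game E src tgt ce Or De H' P \<and>
           equivalent_games H S id c H' P set ce"
proof -
  note game = assms[unfolded congestion_game_structure_def]
  define n where "n = card R"
  obtain rr where rr: "bij_betw rr {0..<n} R"
    using ex_bij_betw_nat_finite game unfolding n_def by metis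
  define P where "P h = (\<lambda>s. chain_route (\<lambda>i. rr i \<in> s) n) ` S h" for h
  have "series_parallel chain_src chain_tgt {0..2*n} 0 (Suc n)"
    using series_parallel_chain[of 0 n] by simp
  moreover have "\<forall>i<n. admissible_cost (c (rr i))"
    using game rr by (auto simp: bij_betw_def)
  then have "common_OD_routing_game {0..2*n} chain_src chain_tgt (chain_cost c rr n) 0 (Suc n) H P"
    using game by (auto simp: common_OD_routing_game_def P_def admissible_chain_cost is_path_chain_route)
  moreover have "equivalent_games H S id c H P set (chain_cost c rr n)"
    unfolding P_def using game by (intro equivalent_games_chain_routing[OF rr]) blast
  ultimately show ?thesis by blast
qed

end
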